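(* In the setting described in the context, let $p$ be a facet of $\Delta_\lambda$ of $\mathbf a$-degree at least $1$, with nodes $v_1,\dots,v_{k-1}$ labelled $1,\dots,k-1$, so that $p$ is identified with the simplex on $[k-1]=\{1,\dots,k-1\}$. Then every facet of $F_{<p}\cap p$ is of the form $[k-1]\setminus L$ where $L=\{i,i+1,\dots,i+j\}$ is a set of consecutive indices.
   Context: Let $n,d\ge2$, $V(n,d)=\{\mathbf b\in\mathbb N^n:\sum_i b_i=d\}$, and let $\mathbf a\in V(n,d)$ satisfy $a_1\le\dots\le a_n$ and $\mathbf a\notin\{(0,\dots,0,d),(0,\dots,0,1,d-1),(0,\dots,0,2,d-2)\}$. Let $\Gamma=V(n,d)\setminus\{\mathbf a\}$ and assume $\Gamma+\Gamma=V(n,2d)$. Order $V(n,d)$ lexicographically ($b<c$ iff the first nonzero coordinate of $c-b$ is positive). Let $\lambda$ be in the semigroup generated by $\Gamma$, $k=|\lambda|=(\sum_i\lambda_i)/d$. A closed chain from $0$ to $\lambda$ is a sequence $0=v_0,v_1,\dots,v_k=\lambda$ in $\mathbb N^n$ with all links $v_j-v_{j-1}\in V(n,d)$; its $\mathbf a$-degree is the number of links equal to $\mathbf a$; its open chain is $\{v_1,\dots,v_{k-1}\}$, with $v_j$ the node labelled $j$. $\Delta_\lambda$ is the simplicial complex whose facets are all these open chains. Facets are ordered: $q<p$ iff $\mathbf a$-degree of $q$ is smaller than that of $p$, or equal and the link sequence of $q$ is lexicographically smaller than that of $p$ (first links compared first, using the order on $V(n,d)$). $F_{<p}$ is the subcomplex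 of $\Delta_\lambda$ generated by the facets $q<p$; $p$ also denotes the full simplex on its nodes. *)

theory Defs
  imports Main
begin

text \<open>Vectors in N^n are represented as lists of naturals of length n.\<close>

definition V :: "nat \<Rightarrow> nat \<Rightarrow> nat list set" where
  "V n d = {b. length b = n \<and> sum_list b = d}"

definition vadd :: "nat list \<Rightarrow> nat list \<Rightarrow> nat list" where
  "vadd b c = map2 (+) b c"

definition vlt :: "nat list \<Rightarrow> nat list \<Rightarrow> bool" where
  "vlt b c \<longleftrightarrow> (\<exists>i < length b. (\<forall>j<i. b ! j = c ! j) \<and> b ! i < c ! i)"

definition gen_semigroup :: "nat \<Rightarrow> nat list set \<Rightarrow> nat list set" where
  "gen_semigroup n G = {lam. length lam = n \<and>
      (\<exists>gs. set gs \<subseteq> G \<and> lam = map (\<lambda>i. \<Sum>l<length gs. gs ! l ! i) [0..<n])}"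

text \<open>A chain is given by its sequence of links ls; its node number j is the sum
  of the first j links (node 0 = origin).\<close>
definition node :: "nat \<Rightarrow> nat list list \<Rightarrow> nat \<Rightarrow> nat list" where
  "node n ls j = map (\<lambda>i. \<Sum>l<j. ls ! l ! i) [0..<n]"

definition closed_chain :: "nat \<Rightarrow> nat \<Rightarrow> nat list \<Rightarrow> nat list list \<Rightarrow> bool" where
  "closed_chain n d lam ls \<longleftrightarrow> set ls \<subseteq> V n d \<and> node n ls (length ls) = lam"

definition open_chain :: "nat \<Rightarrow> nat list list \<Rightarrow> nat list set" where
  "open_chain n ls = node n ls ` {1..<length ls}"

definition adeg :: "nat list \<Rightarrow> nat list list \<Rightarrow> nat" where
  "adeg a ls = length (filter (\<lambda>x. x = a) ls)"

definition links_lex_less :: "nat list list \<Rightarrow> nat list list \<Rightarrow> bool" where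
  "links_lex_less q p \<longleftrightarrow>
     (\<exists>i < length q. (\<forall>j<i. q ! j = p ! j) \<and> vlt (q ! i) (p ! i))"

definition facet_less :: "nat list \<Rightarrow> nat list list \<Rightarrow> nat list list \<Rightarrow> bool" where
  "facet_less a q p \<longleftrightarrow> adeg a q < adeg a p \<or> (adeg a q = adeg a p \<and> links_lex_less q p)"

definition gen_complex :: "'v set set \<Rightarrow> 'v set set" where
  "gen_complex F = {S. \<exists>T\<in>F. S \<subseteq> T}"

definition facets :: "'v set set \<Rightarrow> 'v set set" where
  "facets K = {S \<in> K. \<forall>T\<in>K. S \<subseteq> T \<longrightarrow> T = S}"

definition F_less :: "nat \<Rightarrow> nat \<Rightarrow> nat list \<Rightarrow> nat list \<Rightarrow> nat list list \<Rightarrow> nat list set set" where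
  "F_less n d a lam p = gen_complex {open_chain n q | q. closed_chain n d lam q \<and> facet_less a q p}"

end

theory Submission
  imports Defs
begin

text \<open>
  Let \<open>q < p\<close> be a facet whose open chain contains a face \<open>S\<close> of \<open>p\<close>. Follow \<open>q\<close> until it
  first leaves \<open>p\<close> (after node \<open>s\<close>) and until it first returns to \<open>p\<close> (at node \<open>e \<ge> s + 2\<close>).
  Exchanging this detour between \<open>q\<close> and \<open>p\<close> yields two closed chains whose \<open>a\<close>-degrees add
  up to those of \<open>q\<close> and \<open>p\<close>; the one running along the detour of \<open>q\<close> inherits the
  lexicographic advantage of \<open>q\<close>, so one of the two is still smaller than \<open>p\<close>. If it is the
  chain through the detour of \<open>q\<close>, it meets \<open>p\<close> in exactly the nodes outside the interval
  \<open>{s+1..e-1}\<close>; otherwise the other chain meets \<open>p\<close> wherever \<open>q\<close> does and also at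
  node \<open>s+1\<close>, so we recurse.
  Hence every face of \<open>F\<^sub><\<^sub>p \<inter> p\<close> lies in a face \<open>[k-1] - {i..i+j}\<close> of \<open>F\<^sub><\<^sub>p \<inter> p\<close>, and facets
  are of this form.
\<close>

lemma nth_node: "i < n \<Longrightarrow> node n ls j ! i = (\<Sum>l<j. ls ! l ! i)"
  by (simp add: node_def)

lemma length_node [simp]: "length (node n ls j) = n"
  by (simp add: node_def)

lemma node_eq_iff: "node n q j = node n p j' \<longleftrightarrow> (\<forall>i<n. (\<Sum>l<j. q ! l ! i) = (\<Sum>l<j'. p ! l ! i))"
  by (auto simp: node_def)

lemma node_eq_if_prefix_eq: "\<forall>l<s. q ! l = p ! l \<Longrightarrow> node n q s = node n p s"
  by (simp add: node_eq_iff)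

lemma sum_list_node:
  assumes "set ls \<subseteq> V n d" "j \<le> length ls"
  shows "sum_list (node n ls j) = j * d"
proof -
  have "sum_list (node n ls j) = (\<Sum>i<n. \<Sum>l<j. ls ! l ! i)"
    by (simp add: node_def sum_list_sum_nth atLeast0LessThan)
  also have "\<dots> = (\<Sum>l<j. \<Sum>i<n. ls ! l ! i)"
    by (rule sum.swap)
  also have "\<dots> = (\<Sum>l<j. d)"
  proof (rule sum.cong)
    fix l assume "l \<in> {..<j}"
    then have "ls ! l \<in> V n d"
      using assms by (auto intro: nth_mem)
    then show "(\<Sum>i<n. ls ! l ! i) = d"
      by (auto simp: V_def sum_list_sum_nth atLeast0LessThan)
  qed simp
  finally show ?thesis by simp
qed

lemma sum_list_closed_chain:
  "closed_chain n d lam p \<Longrightarrow> sum_list lam = length p * d"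
  using sum_list_node[of p n d "length p"] by (simp add: closed_chain_def)

lemma closed_chain_length_eq:
  "\<lbrakk>d > 0; closed_chain n d lam p; closed_chain n d lam q\<rbrakk> \<Longrightarrow> length q = length p"
  using sum_list_closed_chain[of n d lam p] sum_list_closed_chain[of n d lam q] by simp

text \<open>A node determines its label, since the coordinates of node \<open>j\<close> sum to \<open>j * d\<close>.\<close>

lemma node_label_eq:
  assumes "d > 0" "set ls \<subseteq> V n d" "set ls' \<subseteq> V n d" "j \<le> length ls" "j' \<le> length ls'"
    and "node n ls j = node n ls' j'"
  shows "j = j'"
  using sum_list_node[OF assms(2,4)] sum_list_node[OF assms(3,5)] assms(1,6) by simp

lemma link_eq_if_nodes_eq:
  assumes "set q \<subseteq> V n d" "set p \<subseteq> V n d" "s < length q" "s < length p"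
    and "node n q s = node n p s" "node n q (Suc s) = node n p (Suc s)"
  shows "q ! s = p ! s"
proof (rule nth_equalityI)
  have "length (q ! s) = n" "length (p ! s) = n"
    using assms(1-4) by (auto simp: V_def dest!: nth_mem)
  then show "length (q ! s) = length (p ! s)" by simp
  fix i assume "i < length (q ! s)"
  with \<open>length (q ! s) = n\<close> have "i < n" by simp
  then have "(\<Sum>l<s. q ! l ! i) = (\<Sum>l<s. p ! l ! i)"
    and "(\<Sum>l<Suc s. q ! l ! i) = (\<Sum>l<Suc s. p ! l ! i)"
    using assms(5,6) node_eq_iff by metis+
  then show "q ! s ! i = p ! s ! i" by simp
qed

definition replace_segment :: "nat \<Rightarrow> nat \<Rightarrow> 'a list \<Rightarrow> 'a list \<Rightarrow> 'a list" where
  "replace_segment s e q p = map (\<lambda>l. if s \<le> l \<and> l < e then q ! l else p ! l) [0..<length p]"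

lemma length_replace_segment [simp]: "length (replace_segment s e q p) = length p"
  by (simp add: replace_segment_def)

lemma nth_replace_segment:
  "l < length p \<Longrightarrow> replace_segment s e q p ! l = (if s \<le> l \<and> l < e then q ! l else p ! l)"
  by (simp add: replace_segment_def)

lemma set_replace_segment:
  "length q = length p \<Longrightarrow> set (replace_segment s e q p) \<subseteq> set q \<union> set p"
  by (auto simp: replace_segment_def)

lemma sum_lessThan_replace_segment:
  fixes f g :: "nat \<Rightarrow> nat"
  assumes "s \<le> e" "(\<Sum>l<s. f l) = (\<Sum>l<s. g l)" "(\<Sum>l<e. f l) = (\<Sum>l<e. g l)"
  shows "(\<Sum>l<j. if s \<le> l \<and> l < e then f l else g l) =
         (if s \<le> j \<and> j \<le> e then \<Sum>l<j. f l else \<Sum>l<j. g l)"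
proof (induction j)
  case (Suc j)
  consider "Suc j < s" | "Suc j = s" | "s \<le> j" "Suc j \<le> e" | "s \<le> j" "j = e" | "e < j"
    by linarith
  then show ?case
    using Suc assms by cases auto
qed simp

lemma node_replace_segment:
  assumes "j \<le> length p" "s \<le> e" "node n q s = node n p s" "node n q e = node n p e"
  shows "node n (replace_segment s e q p) j = (if s \<le> j \<and> j \<le> e then node n q j else node n p j)"
proof (rule nth_equalityI)
  fix i assume "i < length (node n (replace_segment s e q p) j)"
  then have i: "i < n" by simp
  have "node n (replace_segment s e q p) j ! i
      = (\<Sum>l<j. if s \<le> l \<and> l < e then q ! l ! i else p ! l ! i)"
    using assms(1) i by (auto simp: nth_node nth_replace_segment intro!: sum.cong)
  also have "\<dots> = (if s \<le> j \<and> j \<le> e then \<Sum>l<j. q ! l ! i else \<Sum>l<j. p ! l ! i)"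
    using assms(3,4) i by (intro sum_lessThan_replace_segment[OF assms(2)]) (metis node_eq_iff)+
  finally show "node n (replace_segment s e q p) j ! i
      = (if s \<le> j \<and> j \<le> e then node n q j else node n p j) ! i"
    using i by (simp add: nth_node)
qed simp

lemma closed_chain_replace_segment:
  assumes "closed_chain n d lam q" "closed_chain n d lam p" "length q = length p"
    and "s \<le> e" "node n q s = node n p s" "node n q e = node n p e"
  shows "closed_chain n d lam (replace_segment s e q p)"
proof -
  have "node n (replace_segment s e q p) (length p) = lam"
    using assms node_replace_segment[OF _ assms(4-6), of "length p"]
    by (auto simp: closed_chain_def)
  moreover have "set q \<union> set p \<subseteq> V n d"
    using assms(1,2) by (simp add: closed_chain_def)
  then have "set (replace_segment s e q p) \<subseteq> V n d"
    using set_replace_segment[OF assms(3)] by blast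
  ultimately show ?thesis
    by (simp add: closed_chain_def)
qed

lemma adeg_eq_count: "adeg a xs = (\<Sum>l<length xs. if xs ! l = a then 1 else 0)"
proof -
  have "adeg a xs = card {l\<in>{..<length xs}. xs ! l = a}"
    by (simp add: adeg_def length_filter_conv_card lessThan_def)
  also have "\<dots> = (\<Sum>l<length xs. if xs ! l = a then 1 else 0)"
    by (simp add: sum.If_cases Int_def conj_commute)
  finally show ?thesis .
qed

lemma adeg_replace_segment:
  assumes "length q = length p"
  shows "adeg a (replace_segment s e q p) + adeg a (replace_segment s e p q) = adeg a q + adeg a p"
  using assms by (simp add: adeg_eq_count sum.distrib[symmetric])
    (rule sum.cong, auto simp: nth_replace_segment)

lemma facet_less_irrefl: "\<not> facet_less a p p"
  by (auto simp: facet_less_def links_lex_less_def vlt_def)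

lemma facet_less_replace_segment:
  assumes "facet_less a q p" "length q = length p" "s < e"
    and "\<forall>l<s. q ! l = p ! l" "q ! s \<noteq> p ! s"
  shows "facet_less a (replace_segment s e q p) p \<or> facet_less a (replace_segment s e p q) p"
proof -
  let ?q1 = "replace_segment s e q p" and ?q2 = "replace_segment s e p q"
  have lex: "links_lex_less ?q1 p" if q_lex: "links_lex_less q p"
  proof -
    obtain i where i: "i < length q" "\<forall>j<i. q ! j = p ! j" "vlt (q ! i) (p ! i)"
      using q_lex unfolding links_lex_less_def by blast
    have "q ! i \<noteq> p ! i"
      using i(3) by (auto simp: vlt_def)
    then have "i = s"
      using i(2) assms(4,5) by (metis linorder_neqE_nat)
    then show ?thesis
      using i assms(2,3) by (auto simp: links_lex_less_def nth_replace_segment intro!: exI[of _ s])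
  qed
  have "adeg a ?q1 + adeg a ?q2 = adeg a q + adeg a p"
    using adeg_replace_segment[OF assms(2)] .
  then show ?thesis
    using assms(1) lex by (auto simp: facet_less_def)
qed

lemma closed_chain_detour:
  assumes "closed_chain n d lam q" "closed_chain n d lam p" "length q = length p" "q \<noteq> p"
  obtains s e where "s + 2 \<le> e" "e \<le> length p" "\<forall>l<s. q ! l = p ! l" "q ! s \<noteq> p ! s"
    "node n q s = node n p s" "node n q e = node n p e"
    "\<And>j. s < j \<Longrightarrow> j < e \<Longrightarrow> node n q j \<noteq> node n p j"
proof -
  have "\<exists>s. s < length p \<and> q ! s \<noteq> p ! s"
    using assms(3,4) nth_equalityI by metis
  then obtain s where s: "s < length p" "q ! s \<noteq> p ! s"
    and s_least: "\<forall>l<s. \<not> (l < length p \<and> q ! l \<noteq> p ! l)"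
    by (subst (asm) exists_least_iff) blast
  then have prefix: "\<forall>l<s. q ! l = p ! l" by auto
  have "node n q (length p) = node n p (length p)"
    using assms(1-3) by (simp add: closed_chain_def)
  with s(1) have "\<exists>e. s < e \<and> e \<le> length p \<and> node n q e = node n p e" by blast
  then obtain e where e: "s < e" "e \<le> length p" "node n q e = node n p e"
    and e_least: "\<forall>j<e. \<not> (s < j \<and> j \<le> length p \<and> node n q j = node n p j)"
    by (subst (asm) exists_least_iff) blast
  have node_s: "node n q s = node n p s"
    using node_eq_if_prefix_eq[OF prefix] .
  have "e \<noteq> Suc s"
    using link_eq_if_nodes_eq[of q n d p s] assms(1-3) s e(3) node_s
    by (auto simp: closed_chain_def)
  with e(1) have "s + 2 \<le> e" by simp
  then show thesis
    using that s prefix e node_s e_least by auto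
qed

lemma facet_less_agreeing_off_interval:
  assumes "d > 0" "closed_chain n d lam p"
  shows "closed_chain n d lam q \<Longrightarrow> facet_less a q p \<Longrightarrow>
    \<exists>q' s e. closed_chain n d lam q' \<and> facet_less a q' p \<and> s + 2 \<le> e \<and> e \<le> length p \<and>
      (\<forall>j\<le>length p. node n q' j = node n p j \<longleftrightarrow> j \<le> s \<or> e \<le> j) \<and>
      (\<forall>j\<le>length p. node n q j = node n p j \<longrightarrow> j \<le> s \<or> e \<le> j)"
proof (induction "card {j\<in>{1..<length p}. node n q j \<noteq> node n p j}" arbitrary: q rule: less_induct)
  case (less q)
  have len: "length q = length p"
    using closed_chain_length_eq[OF assms less.prems(1)] .
  have "q \<noteq> p"
    using less.prems(2) facet_less_irrefl by metis
  then obtain s e where se: "s + 2 \<le> e" "e \<le> length p" "\<forall>l<s. q ! l = p ! l" "q ! s \<noteq> p ! s"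
    and nodes_se: "node n q s = node n p s" "node n q e = node n p e"
    and detour: "\<And>j. s < j \<Longrightarrow> j < e \<Longrightarrow> node n q j \<noteq> node n p j"
    using closed_chain_detour[OF less.prems(1) assms(2) len] by metis
  define q1 where "q1 = replace_segment s e q p"
  define q2 where "q2 = replace_segment s e p q"
  have node_q1: "node n q1 j = (if s \<le> j \<and> j \<le> e then node n q j else node n p j)"
    if "j \<le> length p" for j
    using node_replace_segment[of j p s e n q] that se(1) nodes_se by (simp add: q1_def)
  have node_q2: "node n q2 j = (if s \<le> j \<and> j \<le> e then node n p j else node n q j)"
    if "j \<le> length p" for j
    using node_replace_segment[of j q s e n p] that se(1) nodes_se len by (simp add: q2_def)
  have agree_q: "\<forall>j\<le>length p. node n q j = node n p j \<longrightarrow> j \<le> s \<or> e \<le> j"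
    using detour by (meson not_le)
  consider "facet_less a q1 p" | "facet_less a q2 p"
    using facet_less_replace_segment[OF less.prems(2) len _ se(3,4), of e] se(1)
    by (auto simp: q1_def q2_def)
  then show ?case
  proof cases
    case 1
    have "closed_chain n d lam q1"
      unfolding q1_def using closed_chain_replace_segment[OF less.prems(1) assms(2) len] se(1)
        nodes_se by simp
    moreover have "\<forall>j\<le>length p. node n q1 j = node n p j \<longleftrightarrow> j \<le> s \<or> e \<le> j"
    proof (intro allI impI)
      fix j assume "j \<le> length p"
      show "node n q1 j = node n p j \<longleftrightarrow> j \<le> s \<or> e \<le> j"
      proof (cases "s < j \<and> j < e")
        case True
        then show ?thesis using node_q1[OF \<open>j \<le> length p\<close>] detour by simp
      next
        case False
        then show ?thesis using node_q1[OF \<open>j \<le> length p\<close>] nodes_se by auto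
      qed
    qed
    ultimately show ?thesis
      using 1 se agree_q by blast
  next
    case 2
    have closed_q2: "closed_chain n d lam q2"
      unfolding q2_def using closed_chain_replace_segment[OF assms(2) less.prems(1)] len se(1)
        nodes_se by simp
    have "{j\<in>{1..<length p}. node n q2 j \<noteq> node n p j}
        \<subseteq> {j\<in>{1..<length p}. node n q j \<noteq> node n p j}"
      using node_q2 by (auto split: if_split_asm)
    moreover have "node n q2 (Suc s) = node n p (Suc s)"
      using node_q2[of "Suc s"] se(1,2) by simp
    moreover have "Suc s \<in> {j\<in>{1..<length p}. node n q j \<noteq> node n p j}"
      using detour[of "Suc s"] se(1,2) by simp
    ultimately have "{j\<in>{1..<length p}. node n q2 j \<noteq> node n p j}
        \<subset> {j\<in>{1..<length p}. node n q j \<noteq> node n p j}"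
      by blast
    then have "card {j\<in>{1..<length p}. node n q2 j \<noteq> node n p j}
        < card {j\<in>{1..<length p}. node n q j \<noteq> node n p j}"
      by (simp add: psubset_card_mono)
    with less.hyps closed_q2 2 obtain q' s' e' where
      "closed_chain n d lam q'" "facet_less a q' p" "s' + 2 \<le> e'" "e' \<le> length p"
      "\<forall>j\<le>length p. node n q' j = node n p j \<longleftrightarrow> j \<le> s' \<or> e' \<le> j"
      and agree_q2: "\<forall>j\<le>length p. node n q2 j = node n p j \<longrightarrow> j \<le> s' \<or> e' \<le> j"
      by blast
    moreover have "\<forall>j\<le>length p. node n q j = node n p j \<longrightarrow> j \<le> s' \<or> e' \<le> j"
      using agree_q2 node_q2 by auto
    ultimately show ?thesis by blast
  qed
qed

lemma interval_complement_face:
  assumes "closed_chain n d lam q" "facet_less a q p" "length q = length p" "e \<le> length p"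
    and "\<forall>j\<le>length p. node n q j = node n p j \<longleftrightarrow> j \<le> s \<or> e \<le> j"
  shows "node n p ` ({1..length p - 1} - {s+1..e-1}) \<in> F_less n d a lam p \<inter> Pow (open_chain n p)"
proof -
  have "node n p ` ({1..length p - 1} - {s+1..e-1}) \<subseteq> open_chain n q"
  proof
    fix x assume "x \<in> node n p ` ({1..length p - 1} - {s+1..e-1})"
    then obtain j where j: "j \<in> {1..length p - 1}" "j \<notin> {s+1..e-1}" and x: "x = node n p j"
      by blast
    then have "node n q j = node n p j"
      using assms(4,5) by auto
    moreover have "j \<in> {1..<length q}"
      using j assms(3) by auto
    ultimately show "x \<in> open_chain n q"
      unfolding open_chain_def x by (metis image_eqI)
  qed
  then show ?thesis
    using assms(1,2) by (auto simp: F_less_def gen_complex_def open_chain_def)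
qed

lemma face_subset_interval_complement:
  assumes "d > 0" "closed_chain n d lam q" "closed_chain n d lam p"
    and "S \<subseteq> open_chain n q" "S \<subseteq> open_chain n p"
    and "\<forall>j\<le>length p. node n q j = node n p j \<longrightarrow> j \<le> s \<or> e \<le> j"
  shows "S \<subseteq> node n p ` ({1..length p - 1} - {s+1..e-1})"
proof
  fix x assume "x \<in> S"
  then have "x \<in> node n q ` {1..<length q}" "x \<in> node n p ` {1..<length p}"
    using assms(4,5) by (auto simp: open_chain_def)
  then obtain j j' where j: "j \<in> {1..<length q}" "x = node n q j"
    and j': "j' \<in> {1..<length p}" "x = node n p j'"
    by blast
  have "j = j'"
    using node_label_eq[OF assms(1), of q n p j j'] assms(2,3) j j' by (simp add: closed_chain_def)
  then have "j \<le> s \<or> e \<le> j"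
    using assms(6) j j' by auto
  then have "j' \<in> {1..length p - 1} - {s+1..e-1}"
    using \<open>j = j'\<close> j' by auto
  then show "x \<in> node n p ` ({1..length p - 1} - {s+1..e-1})"
    using j'(2) by blast
qed

theorem lemma3p2:
  fixes n d :: nat and a lam :: "nat list" and p :: "nat list list"
  assumes "n \<ge> 2" and "d \<ge> 2"
    and "a \<in> V n d" and "sorted a"
    and "a \<noteq> replicate (n - 1) 0 @ [d]"
    and "a \<noteq> replicate (n - 2) 0 @ [1, d - 1]"
    and "a \<noteq> replicate (n - 2) 0 @ [2, d - 2]"
    and "{vadd b c | b c. b \<in> V n d - {a} \<and> c \<in> V n d - {a}} = V n (2 * d)"
    and "lam \<in> gen_semigroup n (V n d - {a})"
    and "closed_chain n d lam p"
    and "adeg a p \<ge> 1"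
    and "S \<in> facets (F_less n d a lam p \<inter> Pow (open_chain n p))"
  shows "\<exists>i j. 1 \<le> i \<and> i + j \<le> sum_list lam div d - 1 \<and>
           S = node n p ` ({1..sum_list lam div d - 1} - {i..i + j})"
proof -
  have d: "d > 0" and p: "closed_chain n d lam p"
    using assms(2,10) by simp_all
  have k: "sum_list lam div d = length p"
    using sum_list_closed_chain[OF p] d by simp
  let ?R = "\<lambda>s e. node n p ` ({1..length p - 1} - {s+1..e-1})"
  obtain q where q: "closed_chain n d lam q" "facet_less a q p" "S \<subseteq> open_chain n q"
    using assms(12) by (auto simp: facets_def F_less_def gen_complex_def)
  then obtain q' s e where q': "closed_chain n d lam q'" "facet_less a q' p"
    and se: "s + 2 \<le> e" "e \<le> length p"
    and "\<forall>j\<le>length p. node n q' j = node n p j \<longleftrightarrow> j \<le> s \<or> e \<le> j"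
    and "\<forall>j\<le>length p. node n q j = node n p j \<longrightarrow> j \<le> s \<or> e \<le> j"
    using facet_less_agreeing_off_interval[OF d p] by metis
  then have "?R s e \<in> F_less n d a lam p \<inter> Pow (open_chain n p)" and "S \<subseteq> ?R s e"
    using interval_complement_face[OF q'] face_subset_interval_complement[OF d q(1) p q(3)]
      closed_chain_length_eq[OF d p q'(1)] assms(12) by (auto simp: facets_def)
  then have "S = ?R s e"
    using assms(12) by (auto simp: facets_def)
  moreover have "s + 1 + (e - s - 2) = e - 1"
    using se by simp
  ultimately show ?thesis
    using se k by (intro exI[of _ "s + 1"] exI[of _ "e - s - 2"]) simp
qed

end
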